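(* Let $n$ be a positive integer, $F$ a finite set of cardinality $n$ and $\sigma : F \to F$ a map. (i) For every $a \in F$ there exist nonnegative integers $k, l$ with $l \ge 1$, $\sigma^k(a) = \sigma^{k+l}(a)$ and $k + l \le n$. (ii) For every $a \in F$, if $\sigma^{k_i}(a) = \sigma^{k_i + l_i}(a)$ for $i = 1,2$ (with $k_i \ge 0$, $l_i \ge 1$), then $\sigma^k(a) = \sigma^{k+l}(a)$ for $(k,l) = (\min\{k_1,k_2\}, \gcd\{l_1,l_2\})$. (iii) For every $a \in F$ there is a unique pair $(k_a, l_a)$ of a nonnegative integer $k_a$ and a positive integer $l_a$ such that for all integers $k' \ge 0$, $l' \ge 1$: $\sigma^{k'}(a) = \sigma^{k'+l'}(a)$ if and only if $k_a \le k'$ and $l_a \mid l'$. (iv) Let $K = \max_{a \in F} k_a$ and $L = \operatorname{lcm}_{a \in F} l_a$. Then for all integers $K' \ge 0$, $L' \ge 1$: $\sigma^{K'} = \sigma^{K'+L'}$ if and only if $K \le K'$ and $L \mid L'$. (v) $K + \alpha(L) \le n$.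
   Context: $\sigma^k$ denotes the $k$-th iterate of $\sigma$ ($\sigma^0 = \mathrm{id}$). The function $\alpha : \mathbb{N} \to \mathbb{N}$ is defined by $\alpha(m) = \max\{p^e : p \text{ prime}, e \ge 0, p^e \mid m\}$, the largest prime-power divisor of $m$ (with $\alpha(1) = 1$). *)

theory Defs
  imports "HOL-Computational_Algebra.Primes"
begin

definition alpha :: "nat \<Rightarrow> nat" where
  "alpha m = Max {q. \<exists>p e. prime p \<and> q = p ^ e \<and> q dvd m}"

definition is_tail_period :: "('a \<Rightarrow> 'a) \<Rightarrow> 'a \<Rightarrow> nat \<Rightarrow> nat \<Rightarrow> bool" where
  "is_tail_period \<sigma> a k l \<longleftrightarrow> l \<ge> 1 \<and>
     (\<forall>k' l'. l' \<ge> 1 \<longrightarrow> ((\<sigma> ^^ k') a = (\<sigma> ^^ (k' + l')) a \<longleftrightarrow> k \<le> k' \<and> l dvd l'))"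

definition tail_period :: "('a \<Rightarrow> 'a) \<Rightarrow> 'a \<Rightarrow> nat \<times> nat" where
  "tail_period \<sigma> a = (THE (k, l). is_tail_period \<sigma> a k l)"

definition k_of :: "('a \<Rightarrow> 'a) \<Rightarrow> 'a \<Rightarrow> nat" where
  "k_of \<sigma> a = fst (tail_period \<sigma> a)"

definition l_of :: "('a \<Rightarrow> 'a) \<Rightarrow> 'a \<Rightarrow> nat" where
  "l_of \<sigma> a = snd (tail_period \<sigma> a)"

end

theory Submission
  imports Defs
begin

(* Call (k, l) with l >= 1 and f^k a = f^(k+l) a a cycle of a. A cycle at level k persists at
   every higher level, and by Bezout two cycles combine into one of length gcd l1 l2 at the
   lower of the two levels. Hence the least level k_a and the least length l_a at that level
   describe all cycles of a, and the points f^i a with i < k_a + l_a are pairwise distinct.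
   For (v) take a with k_a = K and b with alpha L dividing l_b (a prime power dividing an lcm
   divides one of its arguments). If the cycle of b misses the orbit of a, the two together
   have k_a + l_a + l_b points; otherwise they share a periodic point, so l_a = l_b. Either way
   K + alpha L <= k_a + l_b <= n. *)

lemma funpow_add_apply: "(f ^^ (m + n)) a = (f ^^ m) ((f ^^ n) a)"
  by (simp add: funpow_add)

lemma funpow_cycle_shift:
  fixes f :: "'a \<Rightarrow> 'a"
  assumes "(f ^^ k) a = (f ^^ (k + l)) a" "k \<le> m"
  shows "(f ^^ m) a = (f ^^ (m + l)) a"
proof -
  obtain d where "m = d + k" using assms(2) le_Suc_ex by (metis add.commute)
  then show ?thesis
    using assms(1) by (metis funpow_add_apply add.assoc)
qed

lemma funpow_cycle_mult:
  fixes f :: "'a \<Rightarrow> 'a"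
  assumes "(f ^^ k) a = (f ^^ (k + l)) a" "k \<le> m"
  shows "(f ^^ m) a = (f ^^ (m + t * l)) a"
proof (induction t)
  case (Suc t)
  have "(f ^^ (m + t * l)) a = (f ^^ (m + t * l + l)) a"
    using assms(2) by (intro funpow_cycle_shift[OF assms(1)]) simp
  moreover have "m + Suc t * l = m + t * l + l" by simp
  ultimately show ?case using Suc.IH by metis
qed simp

lemma funpow_cycle_descend:
  fixes f :: "'a \<Rightarrow> 'a"
  assumes "(f ^^ k1) a = (f ^^ (k1 + l1)) a" "(f ^^ k2) a = (f ^^ (k2 + l2)) a"
    and "l1 \<ge> 1" "k1 \<le> k2"
  shows "(f ^^ k1) a = (f ^^ (k1 + l2)) a"
proof -
  have "k2 \<le> k1 + k2 * l1" using assms(3) by (simp add: trans_le_add2)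
  have "(f ^^ (k1 + l2)) a = (f ^^ (k1 + l2 + k2 * l1)) a"
    by (rule funpow_cycle_mult[OF assms(1)]) simp
  also have "\<dots> = (f ^^ (k1 + k2 * l1 + l2)) a" by (simp add: ac_simps)
  also have "\<dots> = (f ^^ (k1 + k2 * l1)) a"
    by (rule funpow_cycle_shift[OF assms(2) \<open>k2 \<le> k1 + k2 * l1\<close>, symmetric])
  also have "\<dots> = (f ^^ k1) a"
    by (rule funpow_cycle_mult[OF assms(1) order_refl, symmetric])
  finally show ?thesis by simp
qed

lemma funpow_cycle_gcd:
  fixes f :: "'a \<Rightarrow> 'a"
  assumes "(f ^^ k) a = (f ^^ (k + l1)) a" "(f ^^ k) a = (f ^^ (k + l2)) a" "l1 \<ge> 1"
  shows "(f ^^ k) a = (f ^^ (k + gcd l1 l2)) a"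
proof -
  obtain x y where xy: "l1 * x = l2 * y + gcd l1 l2"
    using bezout_nat[of l1 l2] assms(3) by auto
  have "(f ^^ (k + gcd l1 l2)) a = (f ^^ (k + gcd l1 l2 + y * l2)) a"
    by (rule funpow_cycle_mult[OF assms(2)]) simp
  also have "\<dots> = (f ^^ (k + x * l1)) a" using xy by (simp add: ac_simps)
  also have "\<dots> = (f ^^ k) a"
    by (rule funpow_cycle_mult[OF assms(1) order_refl, symmetric])
  finally show ?thesis by simp
qed

lemma funpow_cycle_min_gcd:
  fixes f :: "'a \<Rightarrow> 'a"
  assumes "(f ^^ k1) a = (f ^^ (k1 + l1)) a" "(f ^^ k2) a = (f ^^ (k2 + l2)) a"
    and "l1 \<ge> 1" "l2 \<ge> 1"
  shows "(f ^^ min k1 k2) a = (f ^^ (min k1 k2 + gcd l1 l2)) a"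
proof (cases "k1 \<le> k2")
  case True
  have "(f ^^ k1) a = (f ^^ (k1 + gcd l1 l2)) a"
    using funpow_cycle_descend[OF assms(1-3) True] by (rule funpow_cycle_gcd[OF assms(1) _ assms(3)])
  with True show ?thesis by simp
next
  case False
  have "(f ^^ k2) a = (f ^^ (k2 + gcd l2 l1)) a"
    using funpow_cycle_descend[OF assms(2,1,4)] False
    by (intro funpow_cycle_gcd[OF assms(2) _ assms(4)]) simp
  with False show ?thesis by (simp add: gcd.commute)
qed

lemma is_tail_period_ge_1: "is_tail_period f a k l \<Longrightarrow> l \<ge> 1"
  unfolding is_tail_period_def by simp

lemma is_tail_period_iff:
  "is_tail_period f a k l \<Longrightarrow> l' \<ge> 1 \<Longrightarrow>
    (f ^^ k') a = (f ^^ (k' + l')) a \<longleftrightarrow> k \<le> k' \<and> l dvd l'"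
  unfolding is_tail_period_def by blast

lemma is_tail_period_cycle:
  assumes "is_tail_period f a k l"
  shows "(f ^^ k) a = (f ^^ (k + l)) a"
  using is_tail_period_iff[OF assms is_tail_period_ge_1[OF assms], of k] by simp

lemma is_tail_period_unique:
  assumes "is_tail_period f a k l" "is_tail_period f a k' l'"
  shows "k = k' \<and> l = l'"
proof -
  have "k' \<le> k \<and> l' dvd l"
    using is_tail_period_iff[OF assms(2) is_tail_period_ge_1[OF assms(1)], of k]
      is_tail_period_cycle[OF assms(1)] by simp
  moreover have "k \<le> k' \<and> l dvd l'"
    using is_tail_period_iff[OF assms(1) is_tail_period_ge_1[OF assms(2)], of k']
      is_tail_period_cycle[OF assms(2)] by simp
  ultimately show ?thesis by (auto intro: dvd_antisym)
qed

lemma is_tail_period_exists: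
  fixes f :: "'a \<Rightarrow> 'a"
  assumes "l0 \<ge> 1" "(f ^^ k0) a = (f ^^ (k0 + l0)) a"
  shows "\<exists>k l. is_tail_period f a k l"
proof -
  define k where "k = (LEAST k. \<exists>l\<ge>1. (f ^^ k) a = (f ^^ (k + l)) a)"
  have "\<exists>l\<ge>1. (f ^^ k) a = (f ^^ (k + l)) a"
    unfolding k_def by (rule LeastI[of _ k0]) (use assms in auto)
  then obtain l1 where l1: "l1 \<ge> 1" "(f ^^ k) a = (f ^^ (k + l1)) a" by blast
  define l where "l = (LEAST l. l \<ge> 1 \<and> (f ^^ k) a = (f ^^ (k + l)) a)"
  have "l \<ge> 1 \<and> (f ^^ k) a = (f ^^ (k + l)) a"
    unfolding l_def by (rule LeastI[of _ l1]) (rule conjI[OF l1])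
  then have l: "l \<ge> 1" "(f ^^ k) a = (f ^^ (k + l)) a" by blast+
  have l_least: "l \<le> l'" if "l' \<ge> 1" "(f ^^ k) a = (f ^^ (k + l')) a" for l'
    unfolding l_def by (rule Least_le) (use that in auto)
  have k_least: "k \<le> k'" if "l' \<ge> 1" "(f ^^ k') a = (f ^^ (k' + l')) a" for k' l'
    unfolding k_def by (rule Least_le) (use that in auto)
  have "is_tail_period f a k l"
    unfolding is_tail_period_def
  proof (intro conjI allI impI iffI)
    fix k' l' :: nat
    assume l': "l' \<ge> 1" and cycle: "(f ^^ k') a = (f ^^ (k' + l')) a"
    then show "k \<le> k'" by (rule k_least)
    then have "(f ^^ k) a = (f ^^ (k + gcd l' l)) a"
      using funpow_cycle_min_gcd[OF cycle l(2) l' l(1)] by (simp add: min_absorb2)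
    then have "l \<le> gcd l' l" using l' by (intro l_least) (simp_all add: Suc_le_eq)
    then have "gcd l' l = l" using l(1) by (intro antisym) (simp_all add: Suc_le_eq)
    then show "l dvd l'" by (metis gcd_dvd1)
  next
    fix k' l' :: nat
    assume "k \<le> k' \<and> l dvd l'"
    then obtain t where "k \<le> k'" "l' = t * l" by (metis dvdE mult.commute)
    then show "(f ^^ k') a = (f ^^ (k' + l')) a"
      using funpow_cycle_mult[OF l(2)] by presburger
  qed (use l in simp)
  then show ?thesis by blast
qed

lemma tail_period_eqI:
  assumes "is_tail_period f a k l"
  shows "k_of f a = k" "l_of f a = l"
proof -
  have "tail_period f a = (k, l)"
    unfolding tail_period_def
    by (rule the_equality) (use assms in \<open>auto dest: is_tail_period_unique[OF _ assms]\<close>)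
  then show "k_of f a = k" "l_of f a = l" unfolding k_of_def l_of_def by auto
qed

lemma is_tail_period_tail_period:
  fixes f :: "'a \<Rightarrow> 'a"
  assumes "l0 \<ge> 1" "(f ^^ k0) a = (f ^^ (k0 + l0)) a"
  shows "is_tail_period f a (k_of f a) (l_of f a)"
  using is_tail_period_exists[OF assms] tail_period_eqI by metis

lemma funpow_in_invariant:
  assumes "\<forall>x\<in>F. f x \<in> F" "a \<in> F"
  shows "(f ^^ i) a \<in> F"
  by (induction i) (use assms in auto)

lemma funpow_cycle_exists_le_card:
  fixes f :: "'a \<Rightarrow> 'a"
  assumes "finite F" "\<forall>x\<in>F. f x \<in> F" "a \<in> F"
  shows "\<exists>k l. l \<ge> 1 \<and> (f ^^ k) a = (f ^^ (k + l)) a \<and> k + l \<le> card F"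
proof -
  have "(\<lambda>i. (f ^^ i) a) ` {..card F} \<subseteq> F"
    using funpow_in_invariant[OF assms(2,3)] by auto
  then have "\<not> inj_on (\<lambda>i. (f ^^ i) a) {..card F}"
    using card_inj_on_le[OF _ _ assms(1)] by fastforce
  then obtain i j where "i < j" "j \<le> card F" "(f ^^ i) a = (f ^^ j) a"
    unfolding inj_on_def by (metis atMost_iff linorder_neqE_nat)
  then show ?thesis by (intro exI[of _ i] exI[of _ "j - i"]) auto
qed

lemma is_tail_period_k_of_l_of:
  fixes f :: "'a \<Rightarrow> 'a"
  assumes "finite F" "\<forall>x\<in>F. f x \<in> F" "a \<in> F"
  shows "is_tail_period f a (k_of f a) (l_of f a)"
proof -
  obtain k l where "l \<ge> 1" "(f ^^ k) a = (f ^^ (k + l)) a"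
    using funpow_cycle_exists_le_card[OF assms] by blast
  then show ?thesis by (rule is_tail_period_tail_period)
qed

lemma inj_on_funpow_tail_period:
  assumes "is_tail_period f a k l"
  shows "inj_on (\<lambda>i. (f ^^ i) a) {..<k + l}"
proof -
  have "(f ^^ i) a \<noteq> (f ^^ j) a" if "i < j" "j < k + l" for i j
  proof
    assume "(f ^^ i) a = (f ^^ j) a"
    then have "(f ^^ i) a = (f ^^ (i + (j - i))) a" using \<open>i < j\<close> by simp
    moreover have "j - i \<ge> 1" using \<open>i < j\<close> by simp
    ultimately have "k \<le> i" "l dvd j - i"
      using is_tail_period_iff[OF assms] by blast+
    moreover have "j - i < l" using \<open>k \<le> i\<close> \<open>i < j\<close> \<open>j < k + l\<close> by linarith
    ultimately show False using nat_dvd_not_less[of "j - i" l] \<open>i < j\<close> by simp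
  qed
  then show ?thesis
    by (intro inj_onI) (metis lessThan_iff linorder_neqE_nat)
qed

lemma is_tail_period_meet_eq:
  fixes f :: "'a \<Rightarrow> 'a"
  assumes A: "is_tail_period f a ka la" and B: "is_tail_period f b kb lb"
    and meet: "(f ^^ i) a = (f ^^ j) b" and "kb \<le> j"
  shows "la = lb"
proof -
  have cycle_iff: "(f ^^ i) a = (f ^^ (i + m)) a \<longleftrightarrow> (f ^^ j) b = (f ^^ (j + m)) b" for m
    using meet by (metis add.commute funpow_add_apply)
  have "(f ^^ j) b = (f ^^ (j + lb)) b"
    using is_tail_period_iff[OF B is_tail_period_ge_1[OF B]] \<open>kb \<le> j\<close> by simp
  then have "ka \<le> i \<and> la dvd lb"
    using cycle_iff is_tail_period_iff[OF A is_tail_period_ge_1[OF B]] by blast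
  then have "(f ^^ j) b = (f ^^ (j + la)) b"
    using cycle_iff[of la] is_tail_period_iff[OF A is_tail_period_ge_1[OF A], of i] by simp
  then have "lb dvd la"
    using is_tail_period_iff[OF B is_tail_period_ge_1[OF A]] by blast
  with \<open>ka \<le> i \<and> la dvd lb\<close> show ?thesis by (auto intro: dvd_antisym)
qed

lemma tail_add_period_le_card:
  fixes f :: "'a \<Rightarrow> 'a"
  assumes F: "finite F" "\<forall>x\<in>F. f x \<in> F" "a \<in> F" "b \<in> F"
    and A: "is_tail_period f a ka la" and B: "is_tail_period f b kb lb"
  shows "ka + lb \<le> card F"
proof -
  define orbit where "orbit = (\<lambda>i. (f ^^ i) a) ` {..<ka + la}"
  define cycle where "cycle = (\<lambda>i. (f ^^ i) b) ` {kb..<kb + lb}"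
  have card_orbit: "card orbit = ka + la"
    unfolding orbit_def using card_image[OF inj_on_funpow_tail_period[OF A]] by simp
  have "inj_on (\<lambda>i. (f ^^ i) b) {kb..<kb + lb}"
    using inj_on_funpow_tail_period[OF B] by (rule inj_on_subset) auto
  then have card_cycle: "card cycle = lb" unfolding cycle_def by (simp add: card_image)
  have "orbit \<subseteq> F" "cycle \<subseteq> F"
    unfolding orbit_def cycle_def using funpow_in_invariant[OF F(2)] F(3,4) by auto
  then have le_card: "card orbit \<le> card F" "card (orbit \<union> cycle) \<le> card F"
    by (simp_all add: card_mono F(1))
  show ?thesis
  proof (cases "orbit \<inter> cycle = {}")
    case True
    then have "card (orbit \<union> cycle) = ka + la + lb"
      using card_orbit card_cycle F(1) \<open>orbit \<subseteq> F\<close> \<open>cycle \<subseteq> F\<close>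
      by (simp add: card_Un_disjoint finite_subset)
    then show ?thesis using le_card(2) by simp
  next
    case False
    then obtain i j where "(f ^^ i) a = (f ^^ j) b" "kb \<le> j"
      unfolding orbit_def cycle_def by auto
    then have "la = lb" by (rule is_tail_period_meet_eq[OF A B])
    then show ?thesis using le_card(1) card_orbit by simp
  qed
qed

lemma prime_power_dvd_lcmD:
  fixes x y :: nat
  assumes "prime p" "x \<noteq> 0" "y \<noteq> 0" "p ^ e dvd lcm x y"
  shows "p ^ e dvd x \<or> p ^ e dvd y"
proof -
  have "\<not> is_unit p" using assms(1) by (auto dest: not_prime_unit)
  note power_dvd_iff = power_dvd_iff_le_multiplicity[OF _ this]
  have "lcm x y \<noteq> 0" using assms(2,3) by (simp add: lcm_eq_0_iff)
  then have "e \<le> max (multiplicity p x) (multiplicity p y)"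
    using assms power_dvd_iff by (simp add: multiplicity_lcm)
  then show ?thesis using assms(2,3) power_dvd_iff by (auto simp: max_def split: if_splits)
qed

lemma prime_power_dvd_LcmD:
  fixes A :: "nat set"
  assumes "finite A" "A \<noteq> {}" "0 \<notin> A" "prime p" "p ^ e dvd Lcm A"
  shows "\<exists>x\<in>A. p ^ e dvd x"
  using assms(1-3,5)
proof (induction A rule: finite_ne_induct)
  case (insert x A)
  then have "x \<noteq> 0" "0 \<notin> A" "Lcm A \<noteq> 0" by (auto simp: Lcm_0_iff)
  moreover have "p ^ e dvd lcm x (Lcm A)" using insert.prems(2) by simp
  ultimately have "p ^ e dvd x \<or> p ^ e dvd Lcm A"
    by (intro prime_power_dvd_lcmD[OF assms(4)])
  with insert.IH \<open>0 \<notin> A\<close> show ?case by blast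
qed simp

lemma alpha_prime_power:
  assumes "m \<noteq> 0"
  obtains p e where "prime p" "alpha m = p ^ e" "p ^ e dvd m"
proof -
  define S where "S = {q. \<exists>p e. prime p \<and> q = p ^ e \<and> q dvd m}"
  have "finite S"
    by (rule finite_subset[of S "{..m}"]) (use assms in \<open>auto simp: S_def dvd_imp_le\<close>)
  moreover have "1 \<in> S"
    unfolding S_def by (rule CollectI, rule exI[of _ 2], rule exI[of _ 0]) simp
  ultimately have "Max S \<in> S" by (metis Max_in empty_iff)
  moreover have "alpha m = Max S" unfolding alpha_def S_def ..
  ultimately have "alpha m \<in> S" by simp
  then show ?thesis unfolding S_def using that by auto
qed

lemma alpha_Lcm_dvd_member:
  fixes A :: "nat set"
  assumes "finite A" "A \<noteq> {}" "0 \<notin> A"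
  shows "\<exists>x\<in>A. alpha (Lcm A) dvd x"
proof -
  have "Lcm A \<noteq> 0" using assms by (simp add: Lcm_0_iff)
  then obtain p e where "prime p" "alpha (Lcm A) = p ^ e" "p ^ e dvd Lcm A"
    by (rule alpha_prime_power)
  then show ?thesis using prime_power_dvd_LcmD[OF assms] by auto
qed


lemma is_tail_period_ex1: "is_tail_period f a k l \<Longrightarrow> \<exists>!(k, l). is_tail_period f a k l"
  by (rule ex1I[of _ "(k, l)"]) (auto dest: is_tail_period_unique)

lemma funpow_eq_on_iff_Max_Lcm:
  fixes f :: "'a \<Rightarrow> 'a"
  assumes "finite F" "F \<noteq> {}" "\<And>a. a \<in> F \<Longrightarrow> is_tail_period f a (k_of f a) (l_of f a)"
    and "L \<ge> 1"
  shows "(\<forall>x\<in>F. (f ^^ K) x = (f ^^ (K + L)) x) \<longleftrightarrow>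
    Max (k_of f ` F) \<le> K \<and> Lcm (l_of f ` F) dvd L"
  using is_tail_period_iff[OF assms(3) assms(4)] assms(1,2) by (auto simp: Lcm_dvd_iff)

lemma Max_k_of_add_alpha_Lcm_l_of_le_card:
  fixes f :: "'a \<Rightarrow> 'a"
  assumes "finite F" "F \<noteq> {}" "\<forall>x\<in>F. f x \<in> F"
  shows "Max (k_of f ` F) + alpha (Lcm (l_of f ` F)) \<le> card F"
proof -
  note tail = is_tail_period_k_of_l_of[OF assms(1,3)]
  have "Max (k_of f ` F) \<in> k_of f ` F" using assms(1,2) by simp
  then obtain a where a: "a \<in> F" "Max (k_of f ` F) = k_of f a" by blast
  obtain b where b: "b \<in> F" "alpha (Lcm (l_of f ` F)) dvd l_of f b"
    using alpha_Lcm_dvd_member[of "l_of f ` F"] is_tail_period_ge_1[OF tail] assms(1,2)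
    by fastforce
  then have "alpha (Lcm (l_of f ` F)) \<le> l_of f b"
    using is_tail_period_ge_1[OF tail[OF b(1)]] by (simp add: dvd_imp_le)
  moreover have "k_of f a + l_of f b \<le> card F"
    using tail_add_period_le_card[OF assms(1,3) a(1) b(1) tail[OF a(1)] tail[OF b(1)]] .
  ultimately show ?thesis using a(2) by simp
qed

theorem lemma3p1:
  fixes F :: "'a set" and \<sigma> :: "'a \<Rightarrow> 'a" and n :: nat
  assumes "n \<ge> 1" and "finite F" and "card F = n" and "\<forall>x\<in>F. \<sigma> x \<in> F"
  shows
    "(\<forall>a\<in>F. \<exists>k l. l \<ge> 1 \<and> (\<sigma> ^^ k) a = (\<sigma> ^^ (k + l)) a \<and> k + l \<le> n)
   \<and> (\<forall>a\<in>F. \<forall>k1 l1 k2 l2. l1 \<ge> 1 \<and> l2 \<ge> 1 \<and>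
          (\<sigma> ^^ k1) a = (\<sigma> ^^ (k1 + l1)) a \<and> (\<sigma> ^^ k2) a = (\<sigma> ^^ (k2 + l2)) a \<longrightarrow>
          (\<sigma> ^^ (min k1 k2)) a = (\<sigma> ^^ (min k1 k2 + gcd l1 l2)) a)
   \<and> (\<forall>a\<in>F. \<exists>!(k, l). l \<ge> 1 \<and>
          (\<forall>k' l'. l' \<ge> 1 \<longrightarrow> ((\<sigma> ^^ k') a = (\<sigma> ^^ (k' + l')) a \<longleftrightarrow> k \<le> k' \<and> l dvd l')))
   \<and> (\<forall>K' L'. L' \<ge> 1 \<longrightarrow>
          ((\<forall>x\<in>F. (\<sigma> ^^ K') x = (\<sigma> ^^ (K' + L')) x) \<longleftrightarrow>
           Max (k_of \<sigma> ` F) \<le> K' \<and> Lcm (l_of \<sigma> ` F) dvd L'))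
   \<and> Max (k_of \<sigma> ` F) + alpha (Lcm (l_of \<sigma> ` F)) \<le> n"
proof -
  have "F \<noteq> {}" using assms(1,3) by auto
  note tail = is_tail_period_k_of_l_of[OF assms(2,4)]
  show ?thesis
  proof (intro conjI, goal_cases)
    case 1
    show ?case using funpow_cycle_exists_le_card[OF assms(2,4)] assms(3) by blast
  next
    case 2
    show ?case by (intro ballI allI impI, elim conjE) (rule funpow_cycle_min_gcd)
  next
    case 3
    show ?case unfolding is_tail_period_def[symmetric] using is_tail_period_ex1[OF tail] by blast
  next
    case 4
    show ?case using funpow_eq_on_iff_Max_Lcm[OF assms(2) \<open>F \<noteq> {}\<close> tail] by blast
  next
    case 5
    show ?case using Max_k_of_add_alpha_Lcm_l_of_le_card[OF assms(2) \<open>F \<noteq> {}\<close> assms(4)] assms(3)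
      by simp
  qed
qed

end
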